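(* Assume $0<p<1$, $0<q<1$, $0<r<1$ and let $x_{w_1,w_2}$ ($w_1,w_2\ge0$, $w_1+w_2\ge1$) be the positive numbers defined in the context. (a) For every fixed $w_1\ge 0$, as $w_2\to\infty$, $$x_{w_1,w_2}\sim C(w_1)\,w_2^{-\left(1+\frac{\beta_1+1}{\alpha_2}\right)},\qquad C(w_1)=\frac{r}{\alpha_2}\,\frac{1}{w_1!}\,\frac{\Gamma\!\left(w_1+\frac{\beta_1}{\alpha_1}\right)}{\Gamma\!\left(\frac{\beta_1}{\alpha_1}\right)}\,\frac{\Gamma\!\left(1+\frac{\beta+1}{\alpha_2}\right)}{\Gamma\!\left(1+\frac{\beta_2}{\alpha_2}\right)}.$$ (b) Symmetrically, for every fixed $w_2\ge0$, as $w_1\to\infty$, $$x_{w_1,w_2}\sim C'(w_2)\,w_1^{-\left(1+\frac{\beta_2+1}{\alpha_1}\right)},\qquad C'(w_2)=\frac{1-r}{\alpha_1}\,\frac{1}{w_2!}\,\frac{\Gamma\!\left(w_2+\frac{\beta_2}{\alpha_2}\right)}{\Gamma\!\left(\frac{\beta_2}{\alpha_2}\right)}\,\frac{\Gamma\!\left(1+\frac{\beta+1}{\alpha_1}\right)}{\Gamma\!\left(1+\frac{\beta_1}{\alpha_1}\right)}.$$ Here $a_k\sim b_k$ means $a_k/b_k\to1$ and $\Gamma$ is the Gamma function.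
   Context: Fix an integer $N\ge 3$ and $0<p<1$, $0<q<1$, $0<r<1$. Parameters: $\alpha_1=pr+(1-p)q$, $\alpha_2=pr\frac{N-2}{N-1}+(1-p)q$, $\beta_1=\frac{(1-p)(1-q)}{p}$, $\beta_2=(N-1)\left[(1-r)+\frac{(1-p)(1-q)}{p}\right]$, $\beta=\beta_1+\beta_2$. The numbers $x_{w_1,w_2}$ (integers $w_1,w_2\ge0$, $w_1+w_2\ge1$) are defined by $x_{1,0}=\frac{1-r}{\alpha_1+\beta+1}$, $x_{0,1}=\frac{r}{\alpha_2+\beta+1}$, and for $w_1+w_2>1$ $x_{w_1,w_2}=\frac{(\alpha_1(w_1-1)+\beta_1)x_{w_1-1,w_2}+(\alpha_2(w_2-1)+\beta_2)x_{w_1,w_2-1}}{\alpha_1w_1+\alpha_2w_2+\beta+1}$, with the convention $x_{w_1,w_2}=0$ if $w_1<0$ or $w_2<0$. (In the paper $x_{w_1,w_2}$ is the almost sure limiting proportion of vertices with central weight $w_1$ and peripheral weight $w_2$ in a star-interaction random graph process.) *)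

theory Defs
  imports "HOL-Analysis.Analysis" "HOL-Library.Landau_Symbols"
begin

definition alpha1 :: "nat \<Rightarrow> real \<Rightarrow> real \<Rightarrow> real \<Rightarrow> real" where
  "alpha1 N p q r = p * r + (1 - p) * q"

definition alpha2 :: "nat \<Rightarrow> real \<Rightarrow> real \<Rightarrow> real \<Rightarrow> real" where
  "alpha2 N p q r = p * r * (real N - 2) / (real N - 1) + (1 - p) * q"

definition beta1 :: "nat \<Rightarrow> real \<Rightarrow> real \<Rightarrow> real \<Rightarrow> real" where
  "beta1 N p q r = (1 - p) * (1 - q) / p"

definition beta2 :: "nat \<Rightarrow> real \<Rightarrow> real \<Rightarrow> real \<Rightarrow> real" where
  "beta2 N p q r = (real N - 1) * ((1 - r) + (1 - p) * (1 - q) / p)"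

definition beta :: "nat \<Rightarrow> real \<Rightarrow> real \<Rightarrow> real \<Rightarrow> real" where
  "beta N p q r = beta1 N p q r + beta2 N p q r"

text \<open>The limiting proportions x_{w1,w2}. The value at (0,0) is not used by the
  paper (index set is w1+w2>=1) and is set to 0 here; it never enters the recursion
  for w1+w2>=1.\<close>
function xw :: "nat \<Rightarrow> real \<Rightarrow> real \<Rightarrow> real \<Rightarrow> nat \<Rightarrow> nat \<Rightarrow> real" where
  "xw N p q r w1 w2 =
    (if w1 + w2 = 0 then 0
     else if w1 = 1 \<and> w2 = 0 then
       (1 - r) / (alpha1 N p q r + beta N p q r + 1)
     else if w1 = 0 \<and> w2 = 1 then
       r / (alpha2 N p q r + beta N p q r + 1)
     else
       ((if w1 = 0 then 0 else
          (alpha1 N p q r * (real w1 - 1) + beta1 N p q r) * xw N p q r (w1 - 1) w2)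
        + (if w2 = 0 then 0 else
          (alpha2 N p q r * (real w2 - 1) + beta2 N p q r) * xw N p q r w1 (w2 - 1)))
       / (alpha1 N p q r * real w1 + alpha2 N p q r * real w2 + beta N p q r + 1))"
  by pat_completeness auto
termination
  by (relation "Wellfounded.measure (\<lambda>(N, p, q, r, w1, w2). w1 + w2)") auto

end

theory Submission
  imports Defs "HOL-Real_Asymp.Real_Asymp"
begin

(* For fixed w1 the defining recursion is, in w2, a first-order linear recurrence
     x(w2) (w2 + a) = u(w2) + (w2 - 1 + b) x(w2 - 1)
   whose inhomogeneous term u comes from row w1 - 1. The integrating factor
   Gamma (w2 + a + 1) / Gamma (w2 + b), which grows like w2 powr (a + 1 - b), turns it into a
   telescoping sum. In row 0 there is no inhomogeneous term and x is an explicit Gamma quotient;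
   in the later rows the asymptotics of u, known by induction on w1, carry over to row w1 by
   Stolz-Cesaro, the constant gaining the factor (alpha1 (w1 - 1) + beta1) / (alpha1 w1).
   Part (b) is part (a) for the transposed array. *)

lemma Gamma_real_Suc_shift:
  fixes c :: real
  assumes "real n + c > 0"
  shows "Gamma (real (Suc n) + c) = (real n + c) * Gamma (real n + c)"
proof -
  have "real n + c \<notin> \<int>\<^sub>\<le>\<^sub>0"
    using assms by (auto elim!: nonpos_Ints_cases)
  then show ?thesis
    using Gamma_plus1[of "real n + c"] by (simp add: add_ac)
qed

lemma Gamma_real_asymp_equiv_fact:
  fixes z :: real
  assumes "z > 0"
  shows "(\<lambda>n. Gamma (real n + z)) \<sim>[at_top] (\<lambda>n. fact n * real n powr (z - 1))"
proof -
  have z: "z \<notin> \<int>\<^sub>\<le>\<^sub>0"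
    using assms by (auto elim!: nonpos_Ints_cases)
  have lim: "(\<lambda>n. (real n + z) / real n) \<longlonglongrightarrow> 1"
    by real_asymp
  have "Gamma z \<noteq> 0"
    using Gamma_real_pos[OF assms] by linarith
  then have "(\<lambda>n. Gamma_series z n / Gamma z * ((real n + z) / real n)) \<longlonglongrightarrow> Gamma z / Gamma z * 1"
    by (intro tendsto_intros lim) simp
  then have "(\<lambda>n. Gamma_series z n / Gamma z * ((real n + z) / real n)) \<longlonglongrightarrow> 1"
    using \<open>Gamma z \<noteq> 0\<close> by simp
  then have "(\<lambda>n. fact n * real n powr (z - 1) / Gamma (real n + z)) \<longlonglongrightarrow> 1"
  proof (rule Lim_transform_eventually, unfold eventually_at_top_linorder, intro exI allI impI)
    fix n :: nat
    assume "n \<ge> 1"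
    have "pochhammer z (Suc n) * Gamma z = (real n + z) * Gamma (real n + z)"
      using pochhammer_Gamma[OF z, of "Suc n"] Gamma_real_Suc_shift[of n z] \<open>Gamma z \<noteq> 0\<close> assms
      by (simp add: add_ac del: of_nat_Suc)
    then have "Gamma_series z n / Gamma z * ((real n + z) / real n)
        = fact n * real n powr z / ((real n + z) * Gamma (real n + z)) * ((real n + z) / real n)"
      using \<open>n \<ge> 1\<close> by (simp add: Gamma_series_def powr_def)
    also have "\<dots> = fact n * (real n powr z / real n) / Gamma (real n + z)"
      using \<open>n \<ge> 1\<close> assms Gamma_real_pos[of "real n + z"]
      by (simp add: divide_simps)
    finally show "Gamma_series z n / Gamma z * ((real n + z) / real n)
        = fact n * real n powr (z - 1) / Gamma (real n + z)"
      using \<open>n \<ge> 1\<close> by (simp add: powr_diff)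
  qed
  then show ?thesis
    by (rule asymp_equivI'[THEN asymp_equiv_symI])
qed

definition Gamma_quot :: "real \<Rightarrow> real \<Rightarrow> nat \<Rightarrow> real" where
  "Gamma_quot a b n = Gamma (real n + a) / Gamma (real n + b)"

lemma Gamma_quot_pos: "a > 0 \<Longrightarrow> b > 0 \<Longrightarrow> Gamma_quot a b n > 0"
  unfolding Gamma_quot_def by (simp add: add_nonneg_pos)

lemma Gamma_quot_Suc:
  assumes "a > 0" "b > 0"
  shows "Gamma_quot a b (Suc n) * (real n + b) = Gamma_quot a b n * (real n + a)"
proof -
  have "Gamma (real (Suc n) + a) = (real n + a) * Gamma (real n + a)"
    "Gamma (real (Suc n) + b) = (real n + b) * Gamma (real n + b)"
    using assms by (simp_all add: Gamma_real_Suc_shift add_nonneg_pos del: of_nat_Suc)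
  moreover have "real n + b > 0"
    using assms(2) by simp
  moreover have "Gamma (real n + b) \<noteq> 0"
    using Gamma_real_pos[OF \<open>real n + b > 0\<close>] by linarith
  ultimately show ?thesis
    unfolding Gamma_quot_def by (simp del: of_nat_Suc)
qed

lemma Gamma_quot_asymp_equiv:
  assumes "a > 0" "b > 0"
  shows "Gamma_quot a b \<sim>[at_top] (\<lambda>n. real n powr (a - b))"
proof -
  have "Gamma_quot a b \<sim>[at_top] (\<lambda>n. fact n * real n powr (a - 1) / (fact n * real n powr (b - 1)))"
    unfolding Gamma_quot_def
    by (intro asymp_equiv_divide Gamma_real_asymp_equiv_fact assms)
  also have "\<dots> \<sim>[at_top] (\<lambda>n. real n powr (a - b))"
    by (rule asymp_equiv_refl_ev)
      (use eventually_gt_at_top[of 0] in \<open>eventually_elim, simp add: powr_diff\<close>)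
  finally show ?thesis .
qed

lemma Stolz_Cesaro:
  fixes F G :: "nat \<Rightarrow> real"
  assumes G_top: "filterlim G at_top sequentially"
    and G_mono: "\<And>n. G n < G (Suc n)"
    and lim: "(\<lambda>n. (F (Suc n) - F n) / (G (Suc n) - G n)) \<longlonglongrightarrow> L"
  shows "(\<lambda>n. F n / G n) \<longlonglongrightarrow> L"
proof (rule tendstoI)
  fix e :: real
  assume "e > 0"
  define H where "H n = F n - L * G n" for n
  obtain N where N: "\<And>n. n \<ge> N \<Longrightarrow> \<bar>(F (Suc n) - F n) / (G (Suc n) - G n) - L\<bar> < e / 2"
    using tendstoD[OF lim, of "e / 2"] \<open>e > 0\<close>
    by (auto simp: eventually_sequentially dist_real_def)
  have increment: "\<bar>H (Suc n) - H n\<bar> \<le> e / 2 * (G (Suc n) - G n)" if "n \<ge> N" for n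
  proof -
    have pos: "G (Suc n) - G n > 0"
      using G_mono[of n] by simp
    have "H (Suc n) - H n = ((F (Suc n) - F n) / (G (Suc n) - G n) - L) * (G (Suc n) - G n)"
      using pos by (simp add: H_def field_simps)
    then show ?thesis
      using N[OF that] pos by (simp add: abs_mult mult_right_mono)
  qed
  have telescope: "\<bar>H n - H N\<bar> \<le> e / 2 * (G n - G N)" if "n \<ge> N" for n
    using that
  proof (induction n rule: dec_induct)
    case (step n)
    have "\<bar>H (Suc n) - H N\<bar> \<le> \<bar>H (Suc n) - H n\<bar> + \<bar>H n - H N\<bar>"
      by linarith
    also have "\<dots> \<le> e / 2 * (G (Suc n) - G n) + e / 2 * (G n - G N)"
      using increment[OF \<open>N \<le> n\<close>] step.IH by (rule add_mono)
    also have "\<dots> = e / 2 * (G (Suc n) - G N)"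
      by (simp only: distrib_left[symmetric]) simp
    finally show ?case .
  qed simp
  define M where "M = \<bar>H N\<bar> + e / 2 * \<bar>G N\<bar>"
  have "(\<lambda>n. M * inverse (G n)) \<longlonglongrightarrow> M * 0"
    by (intro tendsto_mult tendsto_const tendsto_inverse_0_at_top G_top)
  then have "(\<lambda>n. M / G n) \<longlonglongrightarrow> 0"
    by (simp add: divide_inverse)
  then have "eventually (\<lambda>n. M / G n < e / 2) sequentially"
    by (rule order_tendstoD(2)) (use \<open>e > 0\<close> in simp)
  moreover have "eventually (\<lambda>n. G n \<ge> 1) sequentially"
    using G_top by (simp add: filterlim_at_top)
  moreover have "eventually (\<lambda>n. n \<ge> N) sequentially"
    by (rule eventually_ge_at_top)
  ultimately show "eventually (\<lambda>n. dist (F n / G n) L < e) sequentially"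
  proof eventually_elim
    case (elim n)
    have "e / 2 * (G n - G N) \<le> e / 2 * (G n + \<bar>G N\<bar>)"
      using \<open>e > 0\<close> by (intro mult_left_mono) auto
    then have "\<bar>H n\<bar> \<le> M + e / 2 * G n"
      using telescope[OF \<open>n \<ge> N\<close>] unfolding M_def distrib_left by linarith
    then have "\<bar>H n\<bar> / G n \<le> M / G n + e / 2"
      using \<open>G n \<ge> 1\<close> by (simp add: divide_simps)
    moreover have "F n / G n - L = H n / G n"
      using \<open>G n \<ge> 1\<close> by (simp add: H_def field_simps)
    then have "dist (F n / G n) L = \<bar>H n\<bar> / G n"
      using \<open>G n \<ge> 1\<close> by (simp add: dist_real_def abs_divide)
    ultimately show ?case
      using \<open>M / G n < e / 2\<close> by linarith
  qed
qed

lemma Stolz_Cesaro_asymp_equiv: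
  fixes F G :: "nat \<Rightarrow> real"
  assumes "filterlim G at_top sequentially" and G_mono: "\<And>n. G n < G (Suc n)"
    and "(\<lambda>n. F (Suc n) - F n) \<sim>[at_top] (\<lambda>n. G (Suc n) - G n)"
  shows "F \<sim>[at_top] G"
proof -
  have "G (Suc n) - G n \<noteq> 0" for n
    using G_mono[of n] by simp
  then have "(\<lambda>n. (F (Suc n) - F n) / (G (Suc n) - G n)) \<longlonglongrightarrow> 1"
    by (intro asymp_equivD_strong[OF assms(3)] always_eventually) simp
  then show ?thesis
    by (intro asymp_equivI' Stolz_Cesaro[OF assms(1) G_mono])
qed

lemma integrating_factor_step:
  assumes "a + 1 > 0" "b > 0"
    and "y' * (real (Suc n) + a) = v + (real n + b) * y"
  shows "Gamma_quot (a + 1) b (Suc n) * y' - Gamma_quot (a + 1) b n * y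
    = Gamma_quot (a + 1) b (Suc n) * v / (real (Suc n) + a)"
proof -
  let ?P = "Gamma_quot (a + 1) b"
  have P_Suc: "?P (Suc n) * (real n + b) = ?P n * (real (Suc n) + a)"
    using Gamma_quot_Suc[OF assms(1,2), of n] by (simp add: add_ac)
  have "(?P (Suc n) * y' - ?P n * y) * (real (Suc n) + a)
      = ?P (Suc n) * (y' * (real (Suc n) + a)) - y * (?P n * (real (Suc n) + a))"
    by (simp add: algebra_simps)
  also have "\<dots> = ?P (Suc n) * (v + (real n + b) * y) - y * (?P (Suc n) * (real n + b))"
    by (simp only: assms(3) P_Suc)
  also have "\<dots> = ?P (Suc n) * v"
    by (simp add: algebra_simps)
  finally show ?thesis
    using assms(1) by (simp add: field_simps)
qed

lemma linear_recurrence_asymp_equiv: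
  fixes f u :: "nat \<Rightarrow> real" and a b g K :: real
  assumes a: "a + 1 > 0" and b: "b > 0" and K: "K > 0" and d: "a + 1 - b - g > 0"
    and rec: "\<And>n. f (Suc n) * (real (Suc n) + a) = u (Suc n) + (real n + b) * f n"
    and u: "u \<sim>[at_top] (\<lambda>n. K * real n powr (-g))"
  shows "f \<sim>[at_top] (\<lambda>n. K / (a + 1 - b - g) * real n powr (-g))"
proof -
  define d where "d = a + 1 - b - g"
  define P where "P = Gamma_quot (a + 1) b"
  define F where "F n = P n * f n" for n
  define G where "G n = K / d * real n powr d" for n :: nat
  have "d > 0"
    using d by (simp add: d_def)
  have dF: "F (Suc n) - F n = P (Suc n) * u (Suc n) / (real (Suc n) + a)" for n
    unfolding F_def P_def using integrating_factor_step[OF a b rec] .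
  have "(\<lambda>n. F (Suc n) - F n) \<sim>[at_top]
      (\<lambda>n. real (Suc n) powr (a + 1 - b) * (K * real (Suc n) powr (-g)) / (real (Suc n) + a))"
    unfolding dF P_def
    by (intro asymp_equiv_intros asymp_equiv_compose'[OF _ filterlim_Suc] Gamma_quot_asymp_equiv u)
      (use a b in auto)
  also have "\<dots> \<sim>[at_top] (\<lambda>n. K * real (Suc n) powr d / (real (Suc n) + a))"
    by (intro asymp_equiv_refl_ev always_eventually) (simp add: d_def powr_add[symmetric])
  also have "\<dots> \<sim>[at_top] (\<lambda>n. G (Suc n) - G n)"
    unfolding G_def using \<open>d > 0\<close> K by real_asymp
  finally have "F \<sim>[at_top] G"
  proof (rule Stolz_Cesaro_asymp_equiv[rotated 2])
    show "filterlim G at_top sequentially"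
      unfolding G_def using K \<open>d > 0\<close> by real_asymp
    show "G n < G (Suc n)" for n
      unfolding G_def using K \<open>d > 0\<close> by (intro mult_strict_left_mono powr_less_mono2) auto
  qed
  have "f \<sim>[at_top] (\<lambda>n. F n / P n)"
    using Gamma_quot_pos[OF a b]
    by (intro asymp_equiv_refl_ev always_eventually) (simp add: F_def P_def less_imp_neq[THEN not_sym])
  also have "\<dots> \<sim>[at_top] (\<lambda>n. G n / real n powr (a + 1 - b))"
    unfolding P_def using a b
    by (intro asymp_equiv_divide \<open>F \<sim>[at_top] G\<close> Gamma_quot_asymp_equiv) auto
  also have "\<dots> \<sim>[at_top] (\<lambda>n. K / d * real n powr (-g))"
  proof (intro asymp_equiv_refl_ev always_eventually allI)
    fix n
    have "real n powr d / real n powr (a + 1 - b) = real n powr (-g)"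
      by (simp add: d_def powr_diff[symmetric])
    then show "G n / real n powr (a + 1 - b) = K / d * real n powr (-g)"
      unfolding G_def times_divide_eq_right[symmetric] by simp
  qed
  finally show ?thesis
    by (simp only: d_def)
qed

lemma homogeneous_linear_recurrence_asymp_equiv:
  fixes f :: "nat \<Rightarrow> real" and a b :: real
  assumes a: "a + 1 > 0" and b: "b > 0"
    and rec: "\<And>n. n \<ge> 1 \<Longrightarrow> f (Suc n) * (real (Suc n) + a) = (real n + b) * f n"
  shows "f \<sim>[at_top] (\<lambda>n. f 1 * Gamma_quot (a + 1) b 1 * real n powr (b - (a + 1)))"
proof -
  define P where "P = Gamma_quot (a + 1) b"
  have P_nz: "P n \<noteq> 0" for n
    using Gamma_quot_pos[OF a b, of n] unfolding P_def by simp
  have invariant: "P n * f n = P 1 * f 1" if "n \<ge> 1" for n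
    using that
  proof (induction n rule: dec_induct)
    case (step n)
    have "f (Suc n) * (real (Suc n) + a) = 0 + (real n + b) * f n"
      using rec[OF \<open>1 \<le> n\<close>] by simp
    then show ?case
      using integrating_factor_step[OF a b] step.IH unfolding P_def by fastforce
  qed simp
  have "f \<sim>[at_top] (\<lambda>n. f 1 * P 1 / P n)"
  proof (rule asymp_equiv_refl_ev, use eventually_ge_at_top[of 1] in eventually_elim)
    case (elim n)
    show ?case
      using invariant[OF elim] P_nz[of n] by (simp add: eq_divide_eq mult.commute)
  qed
  also have "\<dots> \<sim>[at_top] (\<lambda>n. f 1 * P 1 / real n powr (a + 1 - b))"
    using Gamma_quot_asymp_equiv[OF a b] unfolding P_def
    by (intro asymp_equiv_divide asymp_equiv_refl)
  also have "\<dots> \<sim>[at_top] (\<lambda>n. f 1 * P 1 * real n powr (b - (a + 1)))"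
    by (intro asymp_equiv_refl_ev always_eventually) (simp add: powr_diff)
  finally show ?thesis
    by (simp only: P_def)
qed

(* The constant C(w) of part (a) for A1 = alpha1, A2 = alpha2, B1 = beta1, B2 = beta2, c = r;
   C'(w) of part (b) is the same constant with the indices 1 and 2 exchanged and c = 1 - r. *)
definition tail_constant :: "real \<Rightarrow> real \<Rightarrow> real \<Rightarrow> real \<Rightarrow> real \<Rightarrow> nat \<Rightarrow> real" where
  "tail_constant A1 A2 B1 B2 c w = c / A2 * (1 / fact w)
     * (Gamma (real w + B1 / A1) / Gamma (B1 / A1))
     * (Gamma (1 + (B1 + B2 + 1) / A2) / Gamma (1 + B2 / A2))"

lemma tail_constant_pos:
  "A1 > 0 \<Longrightarrow> A2 > 0 \<Longrightarrow> B1 > 0 \<Longrightarrow> B2 > 0 \<Longrightarrow> c > 0 \<Longrightarrow> tail_constant A1 A2 B1 B2 c w > 0"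
  unfolding tail_constant_def by (simp add: add_nonneg_pos add_pos_pos)

lemma tail_constant_Suc:
  assumes "A1 > 0" "B1 > 0"
  shows "tail_constant A1 A2 B1 B2 c (Suc w) * (A1 * real (Suc w))
    = (A1 * real w + B1) * tail_constant A1 A2 B1 B2 c w"
proof -
  define T where "T = c / A2 * (Gamma (1 + (B1 + B2 + 1) / A2) / Gamma (1 + B2 / A2)) / Gamma (B1 / A1)"
  have tail: "tail_constant A1 A2 B1 B2 c n = T * Gamma (real n + B1 / A1) / fact n" for n
    unfolding tail_constant_def T_def by (simp add: ac_simps)
  have "Gamma (real (Suc w) + B1 / A1) = (real w + B1 / A1) * Gamma (real w + B1 / A1)"
    using assms by (intro Gamma_real_Suc_shift) (simp add: add_nonneg_pos)
  moreover have "fact (Suc w) = real (Suc w) * (fact w :: real)"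
    by (rule fact_Suc)
  moreover have "(real w + B1 / A1) * A1 = A1 * real w + B1"
    using assms by (simp add: field_simps)
  ultimately show ?thesis
    unfolding tail by (simp del: of_nat_Suc fact_Suc)
qed

lemma first_row_asymp_equiv:
  fixes x :: "nat \<Rightarrow> nat \<Rightarrow> real" and A1 A2 B1 B2 c :: real
  assumes A1: "A1 > 0" and A2: "A2 > 0" and B1: "B1 > 0" and B2: "B2 > 0"
    and x_0_1: "x 0 1 = c / (A2 + (B1 + B2) + 1)"
    and x_0_Suc_Suc: "\<And>j. x 0 (Suc (Suc j)) =
      (A2 * real (Suc j) + B2) * x 0 (Suc j) / (A2 * real (Suc (Suc j)) + (B1 + B2) + 1)"
  shows "(\<lambda>j. x 0 j) \<sim>[at_top]
    (\<lambda>j. tail_constant A1 A2 B1 B2 c 0 * real j powr (- (1 + (B1 + 1) / A2)))"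
proof -
  define a where "a = (B1 + B2 + 1) / A2"
  define b where "b = B2 / A2"
  have "a > 0" "b > 0"
    unfolding a_def b_def using A2 B1 B2 by simp_all
  have "x 0 (Suc n) * (real (Suc n) + a) = (real n + b) * x 0 n" if "n \<ge> 1" for n
  proof -
    obtain j where n: "n = Suc j"
      using \<open>n \<ge> 1\<close> by (cases n) auto
    have "A2 * real (Suc (Suc j)) + (B1 + B2) + 1 = A2 * (real (Suc (Suc j)) + a)"
      "A2 * real (Suc j) + B2 = A2 * (real (Suc j) + b)"
      unfolding a_def b_def using A2 by (simp_all add: field_simps)
    then have "x 0 (Suc (Suc j)) = (real (Suc j) + b) * x 0 (Suc j) / (real (Suc (Suc j)) + a)"
      using x_0_Suc_Suc[of j] A2 by simp
    then show ?thesis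
      unfolding n using \<open>a > 0\<close> by (simp add: field_simps del: of_nat_Suc)
  qed
  then have "(\<lambda>j. x 0 j) \<sim>[at_top] (\<lambda>j. x 0 1 * Gamma_quot (a + 1) b 1 * real j powr (b - (a + 1)))"
    using \<open>a > 0\<close> \<open>b > 0\<close> by (intro homogeneous_linear_recurrence_asymp_equiv) auto
  moreover have "b - (a + 1) = - (1 + (B1 + 1) / A2)"
    unfolding a_def b_def using A2 by (simp add: field_simps)
  moreover have "x 0 1 * Gamma_quot (a + 1) b 1 = tail_constant A1 A2 B1 B2 c 0"
  proof -
    have "Gamma_quot (a + 1) b 1 = (1 + a) * Gamma (1 + a) / Gamma (1 + b)"
      using Gamma_real_Suc_shift[of 0 "a + 1"] \<open>a > 0\<close> unfolding Gamma_quot_def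
      by (simp add: add_ac)
    moreover have "A2 * (1 + a) = A2 + (B1 + B2) + 1"
      unfolding a_def using A2 by (simp add: field_simps)
    then have "x 0 1 = c / (A2 * (1 + a))"
      unfolding x_0_1 by simp
    moreover have "1 + (B1 + B2 + 1) / A2 = 1 + a" "1 + B2 / A2 = 1 + b"
      unfolding a_def b_def by simp_all
    moreover have "Gamma (B1 / A1) \<noteq> 0"
      using A1 B1 by (metis Gamma_real_pos divide_pos_pos less_irrefl)
    ultimately show ?thesis
      unfolding tail_constant_def using \<open>a > 0\<close> by simp
  qed
  ultimately show ?thesis
    by simp
qed

lemma next_row_asymp_equiv:
  fixes x :: "nat \<Rightarrow> nat \<Rightarrow> real" and A1 A2 B1 B2 c :: real
  assumes A1: "A1 > 0" and A2: "A2 > 0" and B1: "B1 > 0" and B2: "B2 > 0" and c: "c > 0"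
    and x_Suc_Suc: "\<And>j. x (Suc i) (Suc j) =
      ((A1 * real i + B1) * x i (Suc j) + (A2 * real j + B2) * x (Suc i) j)
      / (A1 * real (Suc i) + A2 * real (Suc j) + (B1 + B2) + 1)"
    and row_i: "(\<lambda>j. x i j) \<sim>[at_top]
      (\<lambda>j. tail_constant A1 A2 B1 B2 c i * real j powr (- (1 + (B1 + 1) / A2)))"
  shows "(\<lambda>j. x (Suc i) j) \<sim>[at_top]
    (\<lambda>j. tail_constant A1 A2 B1 B2 c (Suc i) * real j powr (- (1 + (B1 + 1) / A2)))"
proof -
  define g where "g = 1 + (B1 + 1) / A2"
  define a where "a = (A1 * real (Suc i) + B1 + B2 + 1) / A2"
  define b where "b = B2 / A2"
  define k where "k = (A1 * real i + B1) / A2"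
  define K where "K = k * tail_constant A1 A2 B1 B2 c i"
  have "a > 0" "b > 0" "k > 0"
    unfolding a_def b_def k_def using A1 A2 B1 B2 by (simp_all add: add_pos_pos add_nonneg_pos)
  have "K > 0"
    unfolding K_def using \<open>k > 0\<close> A1 A2 B1 B2 c by (simp add: tail_constant_pos)
  have d: "a + 1 - b - g = A1 * real (Suc i) / A2"
    unfolding a_def b_def g_def using A2 by (simp add: field_simps)
  have rec: "x (Suc i) (Suc n) * (real (Suc n) + a) = k * x i (Suc n) + (real n + b) * x (Suc i) n"
    for n
  proof -
    have "A1 * real (Suc i) + A2 * real (Suc n) + (B1 + B2) + 1 = A2 * (real (Suc n) + a)"
      "A1 * real i + B1 = A2 * k" "A2 * real n + B2 = A2 * (real n + b)"
      unfolding a_def b_def k_def using A2 by (simp_all add: field_simps)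
    then have "x (Suc i) (Suc n) = (k * x i (Suc n) + (real n + b) * x (Suc i) n) / (real (Suc n) + a)"
      using x_Suc_Suc[of n] A2 by (simp add: distrib_left[symmetric] mult.assoc)
    then show ?thesis
      using \<open>a > 0\<close> by (simp add: field_simps del: of_nat_Suc)
  qed
  have u: "(\<lambda>n. k * x i n) \<sim>[at_top] (\<lambda>n. K * real n powr (- g))"
    unfolding K_def mult.assoc g_def by (intro asymp_equiv_mult asymp_equiv_refl row_i)
  have "a + 1 - b - g > 0"
    unfolding d using A1 A2 by simp
  with \<open>a > 0\<close> have "(\<lambda>n. x (Suc i) n) \<sim>[at_top] (\<lambda>n. K / (a + 1 - b - g) * real n powr (- g))"
    by (intro linear_recurrence_asymp_equiv[OF _ \<open>b > 0\<close> \<open>K > 0\<close> _ rec u]) simp_all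
  moreover have "K / (a + 1 - b - g) = tail_constant A1 A2 B1 B2 c (Suc i)"
  proof -
    have "A1 * real (Suc i) > 0"
      using A1 by simp
    then have "tail_constant A1 A2 B1 B2 c (Suc i)
        = (A1 * real i + B1) * tail_constant A1 A2 B1 B2 c i / (A1 * real (Suc i))"
      using tail_constant_Suc[OF A1 B1, of A2 B2 c i] A1 by (simp add: eq_divide_eq)
    then show ?thesis
      unfolding d K_def k_def using A2 by simp
  qed
  ultimately show ?thesis
    unfolding g_def[symmetric] by simp
qed

lemma two_weight_recurrence_asymp_equiv:
  fixes x :: "nat \<Rightarrow> nat \<Rightarrow> real" and A1 A2 B1 B2 c :: real
  assumes A1: "A1 > 0" and A2: "A2 > 0" and B1: "B1 > 0" and B2: "B2 > 0" and c: "c > 0"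
    and x_0_1: "x 0 1 = c / (A2 + (B1 + B2) + 1)"
    and x_0_Suc_Suc: "\<And>j. x 0 (Suc (Suc j)) =
      (A2 * real (Suc j) + B2) * x 0 (Suc j) / (A2 * real (Suc (Suc j)) + (B1 + B2) + 1)"
    and x_Suc_Suc: "\<And>i j. x (Suc i) (Suc j) =
      ((A1 * real i + B1) * x i (Suc j) + (A2 * real j + B2) * x (Suc i) j)
      / (A1 * real (Suc i) + A2 * real (Suc j) + (B1 + B2) + 1)"
  shows "(\<lambda>j. x i j) \<sim>[at_top]
    (\<lambda>j. tail_constant A1 A2 B1 B2 c i * real j powr (- (1 + (B1 + 1) / A2)))"
proof (induction i)
  case 0
  show ?case
    by (rule first_row_asymp_equiv[where x = x, OF A1 A2 B1 B2 x_0_1 x_0_Suc_Suc])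
next
  case (Suc i)
  show ?case
    by (rule next_row_asymp_equiv[where x = x, OF A1 A2 B1 B2 c x_Suc_Suc Suc.IH])
qed

lemma xw_0_1: "xw N p q r 0 1 = r / (alpha2 N p q r + beta N p q r + 1)"
  by (subst xw.simps) (simp del: xw.simps)

lemma xw_1_0: "xw N p q r 1 0 = (1 - r) / (alpha1 N p q r + beta N p q r + 1)"
  by (subst xw.simps) (simp del: xw.simps)

lemma xw_0_Suc_Suc:
  "xw N p q r 0 (Suc (Suc j)) =
     (alpha2 N p q r * real (Suc j) + beta2 N p q r) * xw N p q r 0 (Suc j)
     / (alpha2 N p q r * real (Suc (Suc j)) + beta N p q r + 1)"
  by (subst xw.simps) (simp del: xw.simps)

lemma xw_Suc_Suc_0:
  "xw N p q r (Suc (Suc i)) 0 =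
     (alpha1 N p q r * real (Suc i) + beta1 N p q r) * xw N p q r (Suc i) 0
     / (alpha1 N p q r * real (Suc (Suc i)) + beta N p q r + 1)"
  by (subst xw.simps) (simp del: xw.simps)

lemma xw_Suc_Suc:
  "xw N p q r (Suc i) (Suc j) =
     ((alpha1 N p q r * real i + beta1 N p q r) * xw N p q r i (Suc j)
      + (alpha2 N p q r * real j + beta2 N p q r) * xw N p q r (Suc i) j)
     / (alpha1 N p q r * real (Suc i) + alpha2 N p q r * real (Suc j) + beta N p q r + 1)"
  by (subst xw.simps) (simp del: xw.simps)

lemma alpha_beta_pos:
  assumes "N \<ge> 3" "0 < p" "p < 1" "0 < q" "q < 1" "0 < r" "r < 1"
  shows "alpha1 N p q r > 0" "alpha2 N p q r > 0" "beta1 N p q r > 0" "beta2 N p q r > 0"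
proof -
  have "real N - 2 > 0" "real N - 1 > 0"
    using assms(1) by simp_all
  then show "alpha1 N p q r > 0" "alpha2 N p q r > 0" "beta1 N p q r > 0" "beta2 N p q r > 0"
    using assms(2-7)
    by (simp_all add: alpha1_def alpha2_def beta1_def beta2_def add_pos_pos add_nonneg_pos)
qed

theorem theorem3p4:
  fixes N :: nat and p q r :: real
  assumes "N \<ge> 3"
    and "0 < p" "p < 1" and "0 < q" "q < 1" and "0 < r" "r < 1"
  shows
    "(\<forall>w1::nat.
       (\<lambda>w2::nat. xw N p q r w1 w2) \<sim>[at_top]
       (\<lambda>w2::nat.
          (r / alpha2 N p q r) * (1 / fact w1)
          * (Gamma (real w1 + beta1 N p q r / alpha1 N p q r) / Gamma (beta1 N p q r / alpha1 N p q r))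
          * (Gamma (1 + (beta N p q r + 1) / alpha2 N p q r) / Gamma (1 + beta2 N p q r / alpha2 N p q r))
          * real w2 powr (- (1 + (beta1 N p q r + 1) / alpha2 N p q r))))
   \<and>
    (\<forall>w2::nat.
       (\<lambda>w1::nat. xw N p q r w1 w2) \<sim>[at_top]
       (\<lambda>w1::nat.
          ((1 - r) / alpha1 N p q r) * (1 / fact w2)
          * (Gamma (real w2 + beta2 N p q r / alpha2 N p q r) / Gamma (beta2 N p q r / alpha2 N p q r))
          * (Gamma (1 + (beta N p q r + 1) / alpha1 N p q r) / Gamma (1 + beta1 N p q r / alpha1 N p q r))
          * real w1 powr (- (1 + (beta2 N p q r + 1) / alpha1 N p q r))))"
proof -
  let ?a1 = "alpha1 N p q r" and ?a2 = "alpha2 N p q r"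
    and ?b1 = "beta1 N p q r" and ?b2 = "beta2 N p q r"
  note pos = alpha_beta_pos[OF assms]
  have row: "(\<lambda>w2. xw N p q r w1 w2) \<sim>[at_top]
      (\<lambda>w2. tail_constant ?a1 ?a2 ?b1 ?b2 r w1 * real w2 powr (- (1 + (?b1 + 1) / ?a2)))" for w1
    by (rule two_weight_recurrence_asymp_equiv[where x = "xw N p q r", OF pos \<open>0 < r\<close>])
      (simp_all only: xw_0_1 xw_0_Suc_Suc xw_Suc_Suc beta_def)
  have column: "(\<lambda>w1. xw N p q r w1 w2) \<sim>[at_top]
      (\<lambda>w1. tail_constant ?a2 ?a1 ?b2 ?b1 (1 - r) w2 * real w1 powr (- (1 + (?b2 + 1) / ?a1)))" for w2
    by (rule two_weight_recurrence_asymp_equiv[where x = "\<lambda>i j. xw N p q r j i", OF pos(2,1,4,3)])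
      (use \<open>r < 1\<close> in \<open>simp_all only: xw_1_0 xw_Suc_Suc_0 xw_Suc_Suc beta_def ac_simps diff_gt_0_iff_gt\<close>)
  show ?thesis
    using row column unfolding tail_constant_def beta_def by (simp add: add.commute)
qed

end
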